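(* Let $n\ge 2$. For a prime $p$, let $X_p$ be the set of matrices in $\mathrm{SL}(n,\mathbb{F}_p)$ whose characteristic polynomial has a monic factor over $\mathbb{F}_p$ of degree between $1$ and $n-1$ with constant term $1$. Then $|X_p|/|\mathrm{SL}(n,\mathbb{F}_p)|\to 0$ as $p\to\infty$. *)

theory Defs
  imports "Jordan_Normal_Form.Char_Poly" "HOL-Number_Theory.Cong" "HOL-Computational_Algebra.Primes"
begin

text \<open>The field F_p is represented by the residues {0..<p} in int; a matrix over F_p
  is an n x n integer matrix with all entries in {0..<p}. Determinants and characteristic
  polynomials over F_p are the integer ones reduced mod p.\<close>

definition Fp_mats :: "nat \<Rightarrow> nat \<Rightarrow> int mat set" where
  "Fp_mats n p = {A \<in> carrier_mat n n. \<forall>i<n. \<forall>j<n. A $$ (i, j) \<in> {0..<int p}}"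

definition SL_Fp :: "nat \<Rightarrow> nat \<Rightarrow> int mat set" where
  "SL_Fp n p = {A \<in> Fp_mats n p. [det A = 1] (mod int p)}"

definition dvd_mod_p :: "nat \<Rightarrow> int poly \<Rightarrow> int poly \<Rightarrow> bool" where
  "dvd_mod_p p q f = (\<exists>r :: int poly. \<forall>i. [coeff f i = coeff (q * r) i] (mod int p))"

definition X_p :: "nat \<Rightarrow> nat \<Rightarrow> int mat set" where
  "X_p n p = {A \<in> SL_Fp n p. \<exists>q :: int poly. lead_coeff q = 1 \<and> 1 \<le> degree q \<and> degree q \<le> n - 1
       \<and> coeff q 0 = 1 \<and> dvd_mod_p p q (char_poly A)}"

end

theory Submission
  imports Defs
begin

text \<open>
  Write a matrix as \<open>A = (Y | z)\<close>, with z its last column and the first n - 1 columns Y read as a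
  vector y of \<open>M = n (n - 1)\<close> residues. Expanding along the last column, \<open>det A\<close> and each
  coefficient of \<open>char_poly A\<close> are affine in z, and their coefficients are integer polynomials in y
  of degree at most M. By a Schwartz--Zippel bound modulo p, each of the two cofactor polynomials
  used below vanishes modulo p for at most \<open>M p^(M-1)\<close> blocks y; that they are not identically
  zero is witnessed by the blocks of the identity and of a companion matrix.

  If the cofactor \<open>D_(n-1)(y)\<close> is a unit modulo p, exactly \<open>p^(n-1)\<close> columns z give
  \<open>det A = 1\<close>, so \<open>|SL(n,p)| >= (p - n + 1) p^(M+n-2)\<close>. If the determinant of the linear part
  of \<open>z \<mapsto> char_poly A\<close> is a unit modulo p, z is determined by the characteristic polynomial.
  For A in \<open>X_p\<close> that polynomial has constant term \<open>(-1)^n\<close> and factors modulo p as q s with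
  q, s monic and \<open>q(0) = 1\<close>, which leaves at most \<open>(n - 1) p^(n-2)\<close> possibilities; every other
  block contributes at most \<open>p^(n-1)\<close> columns. Hence \<open>|X_p| = O(p^(M+n-2))\<close> and the ratio is
  \<open>O(1/p)\<close>.
\<close>

definition Fp_vecs :: "nat \<Rightarrow> nat \<Rightarrow> (nat \<Rightarrow> int) set" where
  "Fp_vecs m p = PiE {..<m} (\<lambda>_. {0..<int p})"

lemma finite_Fp_vecs [simp]: "finite (Fp_vecs m p)"
  by (simp add: Fp_vecs_def finite_PiE)

lemma card_Fp_vecs: "card (Fp_vecs m p) = p ^ m"
  by (simp add: Fp_vecs_def card_PiE)

lemma Fp_vecs_range: "x \<in> Fp_vecs m p \<Longrightarrow> i < m \<Longrightarrow> x i \<in> {0..<int p}"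
  unfolding Fp_vecs_def by (auto simp: PiE_iff)

lemma Fp_vecs_undefined: "x \<in> Fp_vecs m p \<Longrightarrow> \<not> i < m \<Longrightarrow> x i = undefined"
  by (auto simp: Fp_vecs_def PiE_def extensional_def)

lemma Fp_vecs_restrict: "x \<in> Fp_vecs (Suc m) p \<Longrightarrow> x(m := undefined) \<in> Fp_vecs m p"
  by (auto simp: Fp_vecs_def PiE_iff extensional_def)

lemma residue_eq_if_dvd_diff:
  fixes a b m :: int
  assumes "a \<in> {0..<m}" "b \<in> {0..<m}" "m dvd a - b"
  shows "a = b"
proof -
  have "a mod m = b mod m"
    using assms(3) by (simp add: mod_eq_dvd_iff)
  with assms(1,2) show ?thesis
    by simp
qed

lemma Fp_vecs_eq_if_cong:
  assumes "x \<in> Fp_vecs m p" "y \<in> Fp_vecs m p" "\<And>i. i < m \<Longrightarrow> [x i = y i] (mod int p)"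
  shows "x = y"
proof (rule PiE_ext[OF assms(1,2)[unfolded Fp_vecs_def]])
  fix i assume "i \<in> {..<m}"
  then have i: "i < m" by simp
  show "x i = y i"
    by (rule residue_eq_if_dvd_diff[OF Fp_vecs_range[OF assms(1) i] Fp_vecs_range[OF assms(2) i]])
      (use assms(3)[OF i] in \<open>simp add: cong_iff_dvd_diff\<close>)
qed

lemma Fp_vecs_upd: "g \<in> Fp_vecs m p \<Longrightarrow> t \<in> {0..<int p} \<Longrightarrow> g(m := t) \<in> Fp_vecs (Suc m) p"
  by (auto simp: Fp_vecs_def PiE_iff extensional_def)

lemma card_Fp_vecs_Suc_filter:
  "card {x \<in> Fp_vecs (Suc m) p. P x} = (\<Sum>g\<in>Fp_vecs m p. card {t \<in> {0..<int p}. P (g(m := t))})"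
proof -
  let ?h = "\<lambda>(g, t). g(m := t)"
  let ?S = "SIGMA g:Fp_vecs m p. {t \<in> {0..<int p}. P (g(m := t))}"
  have "{x \<in> Fp_vecs (Suc m) p. P x} = ?h ` ?S"
  proof (intro equalityI subsetI)
    fix x assume x: "x \<in> {x \<in> Fp_vecs (Suc m) p. P x}"
    then have "(x(m := undefined), x m) \<in> ?S"
      using Fp_vecs_range[of x "Suc m" p m] by (simp add: Fp_vecs_restrict)
    then show "x \<in> ?h ` ?S"
      by (rule rev_image_eqI) simp
  next
    fix x assume "x \<in> ?h ` ?S"
    then obtain g t where "g \<in> Fp_vecs m p" "t \<in> {0..<int p}" "P (g(m := t))" "x = g(m := t)"
      by auto
    then show "x \<in> {x \<in> Fp_vecs (Suc m) p. P x}"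
      by (simp add: Fp_vecs_upd)
  qed
  moreover have "inj_on ?h ?S"
  proof (rule inj_onI, clarify)
    fix g t g' t'
    assume "g \<in> Fp_vecs m p" "g' \<in> Fp_vecs m p" and eq: "g(m := t) = g'(m := t')"
    then have "g m = g' m"
      by (simp add: Fp_vecs_undefined)
    then have "g i = g' i" for i
      using fun_cong[OF eq, of i] by (cases "i = m") simp_all
    then show "g = g' \<and> t = t'"
      using fun_cong[OF eq, of m] by auto
  qed
  ultimately have "card {x \<in> Fp_vecs (Suc m) p. P x} = card ?S"
    by (simp add: card_image)
  also have "\<dots> = (\<Sum>g\<in>Fp_vecs m p. card {t \<in> {0..<int p}. P (g(m := t))})"
  proof (rule card_SigmaI)
    show "\<forall>g\<in>Fp_vecs m p. finite {t \<in> {0..<int p}. P (g(m := t))}"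
    proof
      fix g
      show "finite {t \<in> {0..<int p}. P (g(m := t))}"
        by (rule finite_subset[of _ "{0..<int p}"]) auto
    qed
  qed simp
  finally show ?thesis .
qed

lemma sum_le_if_bounds:
  fixes f :: "'a \<Rightarrow> nat"
  assumes "finite A" "\<And>y. y \<in> A \<Longrightarrow> f y \<le> (if P y then a else b)"
  shows "sum f A \<le> a * card {y \<in> A. P y} + b * card A"
proof -
  have "sum f A \<le> (\<Sum>y\<in>A. a * (if P y then 1 else 0) + b)"
    by (rule sum_mono) (use assms(2) in \<open>force split: if_splits\<close>)
  also have "\<dots> = a * (\<Sum>y\<in>A. if P y then 1 else 0) + b * card A"
    by (simp add: sum.distrib sum_distrib_left)
  also have "(\<Sum>y\<in>A. if P y then 1 else 0) = card {y \<in> A. P y}"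
    using sum.inter_filter[OF assms(1), of "\<lambda>_. 1 :: nat" P] by simp
  finally show ?thesis .
qed

section \<open>Roots of integer polynomials modulo a prime\<close>

lemma dvd_poly_if_dvd_coeffs:
  fixes P :: "int poly"
  assumes "\<And>k. m dvd coeff P k"
  shows "m dvd poly P t"
  unfolding poly_altdef by (rule dvd_sum) (simp add: assms)

lemma card_roots_mod_prime_le_degree:
  assumes p: "prime p" and lc: "\<not> int p dvd lead_coeff f"
  shows "card {t \<in> {0..<int p}. int p dvd poly f t} \<le> degree f"
  using lc
proof (induction "degree f" arbitrary: f)
  case 0
  then obtain c where "f = [:c:]"
    by (metis degree_0_id)
  then have "lead_coeff f = c" "\<And>t. poly f t = c"
    by simp_all
  with 0(2) have "{t \<in> {0..<int p}. int p dvd poly f t} = {}"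
    by auto
  then show ?case
    by (metis card.empty zero_le)
next
  case (Suc n f)
  let ?R = "\<lambda>f. {t \<in> {0..<int p}. int p dvd poly f t}"
  show ?case
  proof (cases "?R f = {}")
    case True
    then show ?thesis by (metis card.empty zero_le)
  next
    case False
    then obtain a where a: "a \<in> ?R f" by blast
    define g where "g = synthetic_div f a"
    have fg: "[:-a, 1:] * g + [:poly f a:] = f"
      unfolding g_def by (rule synthetic_div_correct')
    have deg_g: "degree g = n"
      unfolding g_def using Suc(2) by (simp add: degree_synthetic_div)
    have "lead_coeff f = coeff ([:-a, 1:] * g + [:poly f a:]) (Suc n)"
      using fg Suc(2) by simp
    also have "\<dots> = lead_coeff g"
      using deg_g by (simp add: mult_pCons_left coeff_eq_0)
    finally have IH: "card (?R g) \<le> n"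
      using Suc(1)[of g] deg_g Suc(3) by simp
    have "?R f \<subseteq> insert a (?R g)"
    proof
      fix t assume t: "t \<in> ?R f"
      have "poly f t - poly f a = (t - a) * poly g t"
        using arg_cong[OF fg, of "\<lambda>q. poly q t"] by (simp add: algebra_simps)
      moreover have "int p dvd poly f t - poly f a"
        using t a by (simp add: dvd_diff)
      ultimately have "int p dvd (t - a) * poly g t"
        by simp
      then have "int p dvd t - a \<or> int p dvd poly g t"
        using p by (simp add: prime_dvd_mult_iff)
      then show "t \<in> insert a (?R g)"
        using t a residue_eq_if_dvd_diff[of t "int p" a] by auto
    qed
    moreover have fin: "finite (?R g)"
      by (rule finite_subset[of _ "{0..<int p}"]) auto
    ultimately have "card (?R f) \<le> card (insert a (?R g))"
      by (intro card_mono) auto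
    also have "\<dots> \<le> Suc (card (?R g))"
      using fin by (simp add: card_insert_if)
    also have "\<dots> \<le> degree f"
      using IH Suc(2) by simp
    finally show ?thesis .
  qed
qed

lemma card_roots_mod_prime_le:
  assumes p: "prime p" and lc: "\<not> int p dvd coeff Q k"
    and high: "\<And>j. k < j \<Longrightarrow> int p dvd coeff Q j"
  shows "card {t \<in> {0..<int p}. int p dvd poly Q t} \<le> k"
proof -
  define T where "T = (\<Sum>j\<le>k. monom (coeff Q j) j)"
  have coeff_T: "coeff T j = (if j \<le> k then coeff Q j else 0)" for j
    by (simp add: T_def coeff_sum)
  have "degree T \<le> k"
    by (rule degree_le) (simp add: coeff_T)
  moreover have "k \<le> degree T"
    by (rule le_degree) (use lc in \<open>auto simp: coeff_T\<close>)
  ultimately have deg_T: "degree T = k"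
    by simp
  have "int p dvd poly Q t \<longleftrightarrow> int p dvd poly T t" for t
  proof -
    have "int p dvd poly (Q - T) t"
      by (rule dvd_poly_if_dvd_coeffs) (simp add: coeff_T high)
    from dvd_add_left_iff[OF this, of "poly T t"] show ?thesis
      by simp
  qed
  then have "{t \<in> {0..<int p}. int p dvd poly Q t} = {t \<in> {0..<int p}. int p dvd poly T t}"
    by simp
  also have "card \<dots> \<le> degree T"
    by (rule card_roots_mod_prime_le_degree[OF p]) (simp add: deg_T coeff_T lc)
  finally show ?thesis by (simp add: deg_T)
qed

section \<open>Polynomial functions of integer vectors and the Schwartz--Zippel bound\<close>

text \<open>Multivariate polynomials are represented by the functions they induce:
  \<open>polyfun m d f\<close> says that f is a polynomial of total degree at most d, with coefficients
  in 'a, in the integer variables \<open>x 0, \<dots>, x (m - 1)\<close>.\<close>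
inductive polyfun :: "nat \<Rightarrow> nat \<Rightarrow> ((nat \<Rightarrow> int) \<Rightarrow> 'a :: comm_ring_1) \<Rightarrow> bool" for m where
  polyfun_const: "polyfun m d (\<lambda>x. c)"
| polyfun_var: "i < m \<Longrightarrow> polyfun m 1 (\<lambda>x. of_int (x i))"
| polyfun_add: "polyfun m d f \<Longrightarrow> polyfun m d g \<Longrightarrow> polyfun m d (\<lambda>x. f x + g x)"
| polyfun_mult: "polyfun m d1 f \<Longrightarrow> polyfun m d2 g \<Longrightarrow> polyfun m (d1 + d2) (\<lambda>x. f x * g x)"
| polyfun_mono: "polyfun m d f \<Longrightarrow> d \<le> d' \<Longrightarrow> polyfun m d' f"

lemma polyfun_var_int:
  assumes "i < m"
  shows "polyfun m 1 (\<lambda>x. x i)"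
  using polyfun_var[OF assms, where 'a = int] unfolding of_int_eq_id id_apply .

lemma polyfun_cmult: "polyfun m d f \<Longrightarrow> polyfun m d (\<lambda>x. c * f x)"
  using polyfun_mult[OF polyfun_const[of m 0 c]] by simp

lemma polyfun_eq_on_vars:
  "polyfun m d f \<Longrightarrow> (\<And>i. i < m \<Longrightarrow> x i = x' i) \<Longrightarrow> f x = f x'"
  by (induction rule: polyfun.induct) auto

lemma polyfun_sum:
  assumes "finite S" "\<And>s. s \<in> S \<Longrightarrow> polyfun m d (f s)"
  shows "polyfun m d (\<lambda>x. \<Sum>s\<in>S. f s x)"
  using assms
  by (induction S rule: finite_induct) (auto intro: polyfun_const polyfun_add)

lemma polyfun_prod:
  assumes "finite S" "\<And>s. s \<in> S \<Longrightarrow> polyfun m d (f s)"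
  shows "polyfun m (card S * d) (\<lambda>x. \<Prod>s\<in>S. f s x)"
  using assms
proof (induction S rule: finite_induct)
  case (insert a S)
  then have "polyfun m (d + card S * d) (\<lambda>x. f a x * (\<Prod>s\<in>S. f s x))"
    by (intro polyfun_mult) auto
  with insert show ?case by simp
qed (simp add: polyfun_const)

lemma polyfun_coeff:
  fixes F :: "(nat \<Rightarrow> int) \<Rightarrow> 'a :: comm_ring_1 poly"
  assumes "polyfun m d F"
  shows "polyfun m d (\<lambda>x. coeff (F x) k)"
  using assms
proof (induction arbitrary: k rule: polyfun.induct)
  case (polyfun_var i)
  then show ?case
    using polyfun.polyfun_var[OF polyfun_var]
    by (cases k) (simp_all add: of_int_poly polyfun_const)
next
  case (polyfun_mult d1 f d2 g)
  then show ?case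
    unfolding coeff_mult by (intro polyfun_sum polyfun.polyfun_mult) auto
next
  case (polyfun_mono d f d')
  then show ?case by (meson polyfun.polyfun_mono)
qed (simp_all add: polyfun.polyfun_const polyfun.polyfun_add)

lemma polyfun_det:
  assumes "\<And>x. M x \<in> carrier_mat k k"
    and "\<And>i j. i < k \<Longrightarrow> j < k \<Longrightarrow> polyfun m d (\<lambda>x. M x $$ (i, j))"
  shows "polyfun m (k * d) (\<lambda>x. det (M x))"
proof -
  have "polyfun m (k * d) (\<lambda>x. \<Sum>\<pi>\<in>{\<pi>. \<pi> permutes {0..<k}}. signof \<pi> * (\<Prod>i=0..<k. M x $$ (i, \<pi> i)))"
  proof (intro polyfun_sum polyfun_cmult)
    fix \<pi> assume "\<pi> \<in> {\<pi>. \<pi> permutes {0..<k}}"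
    then have "polyfun m (card {0..<k} * d) (\<lambda>x. \<Prod>i=0..<k. M x $$ (i, \<pi> i))"
      using assms(2) by (intro polyfun_prod) (auto simp: permutes_in_image)
    then show "polyfun m (k * d) (\<lambda>x. \<Prod>i=0..<k. M x $$ (i, \<pi> i))"
      by simp
  qed (simp add: finite_permutations)
  then show ?thesis
    by (simp add: det_def'[OF assms(1)])
qed

lemma polyfun_cofactor:
  assumes "\<And>x. M x \<in> carrier_mat k k"
    and "\<And>i j. i < k \<Longrightarrow> j < k \<Longrightarrow> polyfun m d (\<lambda>x. M x $$ (i, j))"
    and "i < k" "j < k"
  shows "polyfun m ((k - 1) * d) (\<lambda>x. cofactor (M x) i j)"
  unfolding cofactor_def
proof (intro polyfun_cmult polyfun_det)
  show "mat_delete (M x) i j \<in> carrier_mat (k - 1) (k - 1)" for x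
    using assms(1) by (rule mat_delete_carrier)
  have dims: "dim_row (M x) = k" "dim_col (M x) = k" for x
    using assms(1) by auto
  fix a b assume "a < k - 1" "b < k - 1"
  then show "polyfun m d (\<lambda>x. mat_delete (M x) i j $$ (a, b))"
    using assms by (simp add: mat_delete_def dims)
qed

lemma polyfun_coeff_mult_graded:
  fixes F G :: "(nat \<Rightarrow> int) \<Rightarrow> int poly"
  assumes F: "\<forall>k. polyfun m (d1 - k) (\<lambda>x. coeff (F x) k)" "\<forall>x. degree (F x) \<le> d1"
    and G: "\<forall>k. polyfun m (d2 - k) (\<lambda>x. coeff (G x) k)" "\<forall>x. degree (G x) \<le> d2"
  shows "polyfun m (d1 + d2 - k) (\<lambda>x. coeff (F x * G x) k)"
proof -
  have "polyfun m (d1 + d2 - k) (\<lambda>x. coeff (F x) i * coeff (G x) (k - i))" for i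
  proof (cases "i \<le> d1 \<and> k - i \<le> d2")
    case True
    have "polyfun m ((d1 - i) + (d2 - (k - i))) (\<lambda>x. coeff (F x) i * coeff (G x) (k - i))"
      using F(1) G(1) by (intro polyfun.polyfun_mult) auto
    then show ?thesis
      by (rule polyfun.polyfun_mono) (use True in linarith)
  next
    case False
    then have "(\<lambda>x. coeff (F x) i * coeff (G x) (k - i)) = (\<lambda>_. 0)"
      using F(2) G(2) by (intro ext) (metis coeff_eq_0 le_less_trans mult_eq_0_iff not_le)
    then show ?thesis
      by (simp add: polyfun.polyfun_const)
  qed
  then show ?thesis
    unfolding coeff_mult by (intro polyfun_sum) auto
qed

text \<open>The bound d - k on the degree of the k-th coefficient is what the Schwartz--Zippel induction
  needs.\<close>
lemma polyfun_Suc_expansion: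
  fixes f :: "(nat \<Rightarrow> int) \<Rightarrow> int"
  assumes "polyfun (Suc m) d f"
  shows "\<exists>G. (\<forall>k. polyfun m (d - k) (\<lambda>x. coeff (G x) k)) \<and> (\<forall>x. degree (G x) \<le> d)
    \<and> (\<forall>x. f x = poly (G x) (x m))"
  using assms
proof (induction rule: polyfun.induct)
  case (polyfun_const d c)
  show ?case
    by (rule exI[of _ "\<lambda>x. [:c:]"]) (simp add: polyfun.polyfun_const)
next
  case (polyfun_var i)
  show ?case
  proof (cases "i = m")
    case True
    show ?thesis
      by (rule exI[of _ "\<lambda>x. [:0, 1:]"]) (simp add: True polyfun.polyfun_const)
  next
    case False
    with polyfun_var have "i < m" by simp
    then have "polyfun m (1 - k) (\<lambda>x. coeff [:x i:] k)" for k
      using polyfun_var_int[of i m] by (cases k) (simp_all add: polyfun.polyfun_const)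
    then show ?thesis
      by (intro exI[of _ "\<lambda>x. [:x i:]"]) simp
  qed
next
  case (polyfun_add d f g)
  then obtain F G where
    "\<forall>k. polyfun m (d - k) (\<lambda>x. coeff (F x) k)" "\<forall>x. degree (F x) \<le> d" "\<forall>x. f x = poly (F x) (x m)"
    "\<forall>k. polyfun m (d - k) (\<lambda>x. coeff (G x) k)" "\<forall>x. degree (G x) \<le> d" "\<forall>x. g x = poly (G x) (x m)"
    by blast
  then show ?case
    by (intro exI[of _ "\<lambda>x. F x + G x"])
      (auto intro: polyfun.polyfun_add degree_add_le)
next
  case (polyfun_mult d1 f d2 g)
  then obtain F G where F:
    "\<forall>k. polyfun m (d1 - k) (\<lambda>x. coeff (F x) k)" "\<forall>x. degree (F x) \<le> d1" "\<forall>x. f x = poly (F x) (x m)"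
    and G:
    "\<forall>k. polyfun m (d2 - k) (\<lambda>x. coeff (G x) k)" "\<forall>x. degree (G x) \<le> d2" "\<forall>x. g x = poly (G x) (x m)"
    by blast
  have "degree (F x * G x) \<le> d1 + d2" for x
    using F(2) G(2) by (meson add_mono degree_mult_le order_trans)
  with F G polyfun_coeff_mult_graded[OF F(1,2) G(1,2)] show ?case
    by (intro exI[of _ "\<lambda>x. F x * G x"]) simp
next
  case (polyfun_mono d f d')
  then obtain F where F:
    "\<forall>k. polyfun m (d - k) (\<lambda>x. coeff (F x) k)" "\<forall>x. degree (F x) \<le> d" "\<forall>x. f x = poly (F x) (x m)"
    by blast
  have "polyfun m (d' - k) (\<lambda>x. coeff (F x) k)" for k
    using F(1) polyfun_mono.hyps(2) by (blast intro: polyfun.polyfun_mono diff_le_mono)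
  moreover have "degree (F x) \<le> d'" for x
    using F(2) polyfun_mono.hyps(2) by (blast intro: le_trans)
  ultimately show ?case
    using F(3) by blast
qed

lemma max_coeff_not_dvd:
  fixes G :: "'a \<Rightarrow> int poly"
  assumes deg: "\<forall>x. degree (G x) \<le> d" and x0: "x0 \<in> A" "\<not> m dvd coeff (G x0) k"
  shows "\<exists>k0 \<le> d. (\<exists>x1\<in>A. \<not> m dvd coeff (G x1) k0) \<and> (\<forall>x\<in>A. \<forall>j>k0. m dvd coeff (G x) j)"
proof -
  define S where "S = {k. \<exists>x\<in>A. \<not> m dvd coeff (G x) k}"
  have S_le: "k \<le> d" if "k \<in> S" for k
  proof (rule ccontr)
    assume "\<not> k \<le> d"
    then have "coeff (G x) k = 0" for x
      using deg by (meson coeff_eq_0 le_less_trans not_le)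
    with that show False by (simp add: S_def)
  qed
  then have fin: "finite S"
    by (intro finite_subset[of S "{..d}"]) auto
  have "S \<noteq> {}"
    using x0 by (auto simp: S_def)
  with fin have Max_S: "Max S \<in> S"
    by (rule Max_in)
  show ?thesis
  proof (intro exI[of _ "Max S"] conjI)
    show "Max S \<le> d"
      using Max_S by (rule S_le)
    show "\<exists>x1\<in>A. \<not> m dvd coeff (G x1) (Max S)"
      using Max_S by (simp add: S_def)
    show "\<forall>x\<in>A. \<forall>j>Max S. m dvd coeff (G x) j"
    proof (intro ballI allI impI)
      fix x j assume "x \<in> A" "Max S < j"
      show "m dvd coeff (G x) j"
      proof (rule ccontr)
        assume "\<not> m dvd coeff (G x) j"
        with \<open>x \<in> A\<close> have "j \<in> S"
          by (auto simp: S_def)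
        then have "j \<le> Max S"
          by (rule Max_ge[OF fin])
        with \<open>Max S < j\<close> show False
          by simp
      qed
    qed
  qed
qed

theorem card_zeros_polyfun_mod_prime:
  assumes "polyfun m d f" "prime p" "y \<in> Fp_vecs m p" "\<not> int p dvd f y"
  shows "card {x \<in> Fp_vecs m p. int p dvd f x} * p \<le> d * p ^ m"
  using assms
proof (induction m arbitrary: f d y)
  case 0
  have "Fp_vecs 0 p = {\<lambda>_. undefined}"
    by (simp add: Fp_vecs_def)
  with 0 have "{x \<in> Fp_vecs 0 p. int p dvd f x} = {}"
    by auto
  then show ?case by (metis card.empty mult_is_0 zero_le)
next
  case (Suc m)
  obtain G where G_coeff: "\<forall>k. polyfun m (d - k) (\<lambda>x. coeff (G x) k)"
    and deg_G: "\<forall>x. degree (G x) \<le> d" and f_G: "\<forall>x. f x = poly (G x) (x m)"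
    using polyfun_Suc_expansion[OF Suc.prems(1)] by blast
  have G_upd: "G (x(m := t)) = G x" for x t
    by (rule poly_eqI, rule polyfun_eq_on_vars[OF G_coeff[rule_format]]) simp
  have f_upd: "f (g(m := t)) = poly (G g) t" for g t
    using f_G G_upd by simp
  have y': "y(m := undefined) \<in> Fp_vecs m p"
    using Suc.prems(3) by (rule Fp_vecs_restrict)
  have "\<not> int p dvd poly (G (y(m := undefined))) (y m)"
    using Suc.prems(4) f_upd[of "y(m := undefined)" "y m"] by simp
  then obtain k where "\<not> int p dvd coeff (G (y(m := undefined))) k"
    using dvd_poly_if_dvd_coeffs by blast
  then obtain k0 x1 where k0_le: "k0 \<le> d"
    and x1: "x1 \<in> Fp_vecs m p" "\<not> int p dvd coeff (G x1) k0"
    and high: "\<And>g j. g \<in> Fp_vecs m p \<Longrightarrow> k0 < j \<Longrightarrow> int p dvd coeff (G g) j"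
    using max_coeff_not_dvd[OF deg_G y'] by blast
  define h where "h x = coeff (G x) k0" for x
  let ?A = "{g \<in> Fp_vecs m p. int p dvd h g}"
  have "polyfun m (d - k0) h"
    unfolding h_def using G_coeff by blast
  then have IH: "card ?A * p \<le> (d - k0) * p ^ m"
    by (rule Suc.IH[OF _ Suc.prems(2) x1(1)]) (simp add: h_def x1(2))
  have fiber: "card {t \<in> {0..<int p}. int p dvd f (g(m := t))} \<le> (if int p dvd h g then p else k0)"
    if g: "g \<in> Fp_vecs m p" for g
  proof (cases "int p dvd h g")
    case True
    have "card {t \<in> {0..<int p}. int p dvd f (g(m := t))} \<le> card {0..<int p}"
      by (rule card_mono) auto
    with True show ?thesis by simp
  next
    case False
    have "card {t \<in> {0..<int p}. int p dvd poly (G g) t} \<le> k0"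
    proof (rule card_roots_mod_prime_le[OF Suc.prems(2)])
      show "\<not> int p dvd coeff (G g) k0" using False by (simp add: h_def)
      show "int p dvd coeff (G g) j" if "k0 < j" for j
        using high[OF g that] .
    qed
    with False show ?thesis by (simp add: f_upd)
  qed
  have "card {x \<in> Fp_vecs (Suc m) p. int p dvd f x}
      = (\<Sum>g\<in>Fp_vecs m p. card {t \<in> {0..<int p}. int p dvd f (g(m := t))})"
    by (rule card_Fp_vecs_Suc_filter)
  also have "\<dots> \<le> p * card ?A + k0 * p ^ m"
    using sum_le_if_bounds[OF finite_Fp_vecs fiber] by (simp add: card_Fp_vecs)
  finally have "card {x \<in> Fp_vecs (Suc m) p. int p dvd f x} * p \<le> (p * card ?A + k0 * p ^ m) * p"
    by simp
  also have "\<dots> = p * (card ?A * p) + k0 * p ^ Suc m"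
    by (simp add: algebra_simps)
  also have "\<dots> \<le> p * ((d - k0) * p ^ m) + k0 * p ^ Suc m"
    using IH by simp
  also have "\<dots> = d * p ^ Suc m"
    using k0_le by (simp add: algebra_simps)
  finally show ?case .
qed

definition mat_of_parts :: "nat \<Rightarrow> (nat \<Rightarrow> int) \<Rightarrow> (nat \<Rightarrow> int) \<Rightarrow> int mat" where
  "mat_of_parts n y z = mat n n (\<lambda>(i, j). if j < n - 1 then y (i * (n - 1) + j) else z i)"

definition block_of_mat :: "nat \<Rightarrow> int mat \<Rightarrow> nat \<Rightarrow> int" where
  "block_of_mat n A = (\<lambda>t\<in>{..<n * (n - 1)}. A $$ (t div (n - 1), t mod (n - 1)))"

definition last_col_of_mat :: "nat \<Rightarrow> int mat \<Rightarrow> nat \<Rightarrow> int" where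
  "last_col_of_mat n A = (\<lambda>i\<in>{..<n}. A $$ (i, n - 1))"

lemma mat_of_parts_carrier [simp]: "mat_of_parts n y z \<in> carrier_mat n n"
  by (simp add: mat_of_parts_def)

lemma mat_of_parts_dims [simp]:
  "dim_row (mat_of_parts n y z) = n" "dim_col (mat_of_parts n y z) = n"
  by (simp_all add: mat_of_parts_def)

lemma mat_of_parts_index:
  "i < n \<Longrightarrow> j < n \<Longrightarrow>
    mat_of_parts n y z $$ (i, j) = (if j < n - 1 then y (i * (n - 1) + j) else z i)"
  by (simp add: mat_of_parts_def)

lemma block_index_less:
  fixes i j n :: nat
  assumes "i < n" "j < n - 1"
  shows "i * (n - 1) + j < n * (n - 1)"
proof -
  have "i * (n - 1) + j < Suc i * (n - 1)"
    using assms(2) by simp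
  also have "\<dots> \<le> n * (n - 1)"
    using assms(1) by (intro mult_le_mono1) simp
  finally show ?thesis .
qed

lemma block_index_div_mod:
  fixes t n :: nat
  assumes "t < n * (n - 1)"
  shows "t div (n - 1) < n" "t mod (n - 1) < n - 1"
proof -
  have "0 < n - 1"
    using assms by (cases "n - 1 = 0") auto
  with assms show "t div (n - 1) < n" "t mod (n - 1) < n - 1"
    by (simp_all add: less_mult_imp_div_less)
qed

lemma mat_of_parts_Fp_mats:
  assumes "y \<in> Fp_vecs (n * (n - 1)) p" "z \<in> Fp_vecs n p"
  shows "mat_of_parts n y z \<in> Fp_mats n p"
proof -
  have "mat_of_parts n y z $$ (i, j) \<in> {0..<int p}" if "i < n" "j < n" for i j
  proof (cases "j < n - 1")
    case True
    then show ?thesis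
      using that Fp_vecs_range[OF assms(1) block_index_less[OF that(1) True]]
      by (simp add: mat_of_parts_index)
  next
    case False
    then show ?thesis
      using that Fp_vecs_range[OF assms(2) that(1)] by (simp add: mat_of_parts_index)
  qed
  then show ?thesis
    by (simp add: Fp_mats_def)
qed

lemma parts_of_mat_of_parts:
  assumes "y \<in> Fp_vecs (n * (n - 1)) p" "z \<in> Fp_vecs n p"
  shows "block_of_mat n (mat_of_parts n y z) = y" "last_col_of_mat n (mat_of_parts n y z) = z"
proof -
  show "block_of_mat n (mat_of_parts n y z) = y"
  proof
    fix t
    show "block_of_mat n (mat_of_parts n y z) t = y t"
    proof (cases "t < n * (n - 1)")
      case True
      with block_index_div_mod[OF True] show ?thesis
        by (simp add: block_of_mat_def mat_of_parts_index div_mult_mod_eq)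
    qed (use assms(1) in \<open>simp add: block_of_mat_def Fp_vecs_undefined\<close>)
  qed
  show "last_col_of_mat n (mat_of_parts n y z) = z"
    using assms(2) by (auto simp: last_col_of_mat_def mat_of_parts_index Fp_vecs_undefined)
qed

lemma mat_of_parts_of_mat:
  assumes "A \<in> Fp_mats n p"
  shows "block_of_mat n A \<in> Fp_vecs (n * (n - 1)) p" "last_col_of_mat n A \<in> Fp_vecs n p"
    "mat_of_parts n (block_of_mat n A) (last_col_of_mat n A) = A"
proof -
  have A: "A \<in> carrier_mat n n" "\<And>i j. i < n \<Longrightarrow> j < n \<Longrightarrow> A $$ (i, j) \<in> {0..<int p}"
    using assms by (auto simp: Fp_mats_def)
  show "block_of_mat n A \<in> Fp_vecs (n * (n - 1)) p"
    unfolding block_of_mat_def Fp_vecs_def restrict_PiE_iff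
  proof
    fix t assume "t \<in> {..<n * (n - 1)}"
    then show "A $$ (t div (n - 1), t mod (n - 1)) \<in> {0..<int p}"
      using A(2) block_index_div_mod[of t n] by simp
  qed
  show "last_col_of_mat n A \<in> Fp_vecs n p"
    using A(2) by (auto simp: last_col_of_mat_def Fp_vecs_def)
  show "mat_of_parts n (block_of_mat n A) (last_col_of_mat n A) = A"
  proof (rule eq_matI)
    fix i j assume "i < dim_row A" "j < dim_col A"
    then have i: "i < n" and j: "j < n"
      using A(1) by auto
    show "mat_of_parts n (block_of_mat n A) (last_col_of_mat n A) $$ (i, j) = A $$ (i, j)"
    proof (cases "j < n - 1")
      case True
      then show ?thesis
        using i j block_index_less[OF i True] by (simp add: mat_of_parts_index block_of_mat_def)
    next
      case False
      then have "j = n - 1"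
        using j by simp
      then show ?thesis
        using i j by (simp add: mat_of_parts_index last_col_of_mat_def)
    qed
  qed (use A(1) in auto)
qed

lemma card_Fp_mats_filter:
  "card {A \<in> Fp_mats n p. P A}
    = (\<Sum>y\<in>Fp_vecs (n * (n - 1)) p. card {z \<in> Fp_vecs n p. P (mat_of_parts n y z)})"
proof -
  let ?h = "\<lambda>(y, z). mat_of_parts n y z"
  let ?S = "SIGMA y:Fp_vecs (n * (n - 1)) p. {z \<in> Fp_vecs n p. P (mat_of_parts n y z)}"
  have "{A \<in> Fp_mats n p. P A} = ?h ` ?S"
  proof (intro equalityI subsetI)
    fix A assume "A \<in> {A \<in> Fp_mats n p. P A}"
    with mat_of_parts_of_mat[of A n p] show "A \<in> ?h ` ?S"
      by (intro image_eqI[of _ _ "(block_of_mat n A, last_col_of_mat n A)"]) auto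
  qed (auto simp: mat_of_parts_Fp_mats)
  moreover have "inj_on ?h ?S"
  proof (rule inj_onI, clarify)
    fix y z y' z'
    assume "y \<in> Fp_vecs (n * (n - 1)) p" "z \<in> Fp_vecs n p"
      and "y' \<in> Fp_vecs (n * (n - 1)) p" "z' \<in> Fp_vecs n p"
      and "mat_of_parts n y z = mat_of_parts n y' z'"
    then show "y = y' \<and> z = z'"
      using parts_of_mat_of_parts by metis
  qed
  ultimately have "card {A \<in> Fp_mats n p. P A} = card ?S"
    by (simp add: card_image)
  then show ?thesis
    by (simp add: card_SigmaI)
qed

lemma cofactor_eq_if_eq_off_col:
  assumes "A \<in> carrier_mat n n" "B \<in> carrier_mat n n"
    and "\<And>i' j'. i' < n \<Longrightarrow> j' < n \<Longrightarrow> j' \<noteq> j \<Longrightarrow> A $$ (i', j') = B $$ (i', j')"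
  shows "cofactor A i j = cofactor B i j"
proof -
  have "mat_delete A i j = mat_delete B i j"
    using assms by (intro eq_matI) (auto simp: mat_delete_def)
  then show ?thesis
    by (simp add: cofactor_def)
qed

lemma mat_delete_index_carrier:
  "A \<in> carrier_mat n n \<Longrightarrow> a < n - 1 \<Longrightarrow> b < n - 1 \<Longrightarrow>
    mat_delete A i j $$ (a, b) = A $$ (if a < i then a else Suc a, if b < j then b else Suc b)"
  by (simp add: mat_delete_def)

lemma char_poly_matrix_index:
  "A \<in> carrier_mat n n \<Longrightarrow> i < n \<Longrightarrow> j < n \<Longrightarrow>
    char_poly_matrix A $$ (i, j) = (if i = j then [:0, 1:] else 0) + [:- A $$ (i, j):]"
  by (simp add: char_poly_matrix_def)

definition det_cofactor :: "nat \<Rightarrow> (nat \<Rightarrow> int) \<Rightarrow> nat \<Rightarrow> int" where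
  "det_cofactor n y i = cofactor (mat_of_parts n y (\<lambda>_. 0)) i (n - 1)"

definition cp_cofactor :: "nat \<Rightarrow> (nat \<Rightarrow> int) \<Rightarrow> nat \<Rightarrow> int poly" where
  "cp_cofactor n y i = cofactor (char_poly_matrix (mat_of_parts n y (\<lambda>_. 0))) i (n - 1)"

definition cp_coeff_mat :: "nat \<Rightarrow> (nat \<Rightarrow> int) \<Rightarrow> int mat" where
  "cp_coeff_mat n y = mat n n (\<lambda>(k, i). coeff (cp_cofactor n y i) k)"

lemma det_mat_of_parts:
  assumes "0 < n"
  shows "det (mat_of_parts n y z) = (\<Sum>i<n. z i * det_cofactor n y i)"
proof -
  have "det (mat_of_parts n y z)
      = (\<Sum>i<n. mat_of_parts n y z $$ (i, n - 1) * cofactor (mat_of_parts n y z) i (n - 1))"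
    by (rule laplace_expansion_column) (use assms in auto)
  also have "\<dots> = (\<Sum>i<n. z i * det_cofactor n y i)"
    unfolding det_cofactor_def using assms
    by (intro sum.cong refl arg_cong2[where f = "(*)"] cofactor_eq_if_eq_off_col[where n = n])
      (auto simp: mat_of_parts_index)
  finally show ?thesis .
qed

lemma coeff_char_poly_mat_of_parts:
  assumes "0 < n"
  shows "coeff (char_poly (mat_of_parts n y z)) k
    = coeff ([:0, 1:] * cp_cofactor n y (n - 1)) k - (\<Sum>i<n. z i * coeff (cp_cofactor n y i) k)"
proof -
  let ?M = "char_poly_matrix (mat_of_parts n y z)"
  have "char_poly (mat_of_parts n y z) = (\<Sum>i<n. ?M $$ (i, n - 1) * cofactor ?M i (n - 1))"
    unfolding char_poly_def by (rule laplace_expansion_column) (use assms in auto)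
  also have "\<dots> = (\<Sum>i<n. ((if i = n - 1 then [:0, 1:] else 0) + [:- z i:]) * cp_cofactor n y i)"
    unfolding cp_cofactor_def using assms
    by (intro sum.cong refl arg_cong2[where f = "(*)"] cofactor_eq_if_eq_off_col[where n = n])
      (auto simp: char_poly_matrix_index[OF mat_of_parts_carrier] mat_of_parts_index)
  also have "\<dots> = (\<Sum>i<n. if i = n - 1 then [:0, 1:] * cp_cofactor n y i else 0)
      + (\<Sum>i<n. [:- z i:] * cp_cofactor n y i)"
    unfolding sum.distrib[symmetric] by (rule sum.cong) (auto simp: distrib_right)
  also have "\<dots> = [:0, 1:] * cp_cofactor n y (n - 1) + (\<Sum>i<n. [:- z i:] * cp_cofactor n y i)"
    using assms by (simp add: sum.delta)
  finally show ?thesis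
    by (simp add: coeff_sum sum_negf)
qed

lemma coeff_char_poly_mat_of_parts_vec:
  assumes "0 < n" "k < n"
  shows "coeff (char_poly (mat_of_parts n y z)) k
    = coeff ([:0, 1:] * cp_cofactor n y (n - 1)) k - (cp_coeff_mat n y *\<^sub>v vec n z) $ k"
  using assms
  by (simp add: coeff_char_poly_mat_of_parts cp_coeff_mat_def scalar_prod_def atLeast0LessThan
      mult.commute)

lemma polyfun_mat_of_parts_index:
  assumes "i < n" "j < n"
  shows "polyfun (n * (n - 1)) 1 (\<lambda>y. of_int (mat_of_parts n y z $$ (i, j)))"
proof (cases "j < n - 1")
  case True
  with assms polyfun_var[OF block_index_less[OF assms(1) True]] show ?thesis
    by (simp add: mat_of_parts_index)
qed (use assms in \<open>simp add: mat_of_parts_index polyfun_const\<close>)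

lemma polyfun_det_cofactor:
  assumes "i < n"
  shows "polyfun (n * (n - 1)) (n - 1) (\<lambda>y. det_cofactor n y i)"
  using polyfun_cofactor[of "\<lambda>y. mat_of_parts n y (\<lambda>_. 0)" n "n * (n - 1)" 1 i "n - 1"]
    polyfun_mat_of_parts_index[where 'a = int] assms
  unfolding det_cofactor_def of_int_eq_id id_apply by simp

lemma polyfun_coeff_cp_cofactor:
  assumes "i < n"
  shows "polyfun (n * (n - 1)) (n - 1) (\<lambda>y. coeff (cp_cofactor n y i) k)"
proof -
  have "polyfun (n * (n - 1)) 1 (\<lambda>y. char_poly_matrix (mat_of_parts n y (\<lambda>_. 0)) $$ (a, b))"
    if "a < n" "b < n" for a b
  proof -
    have "polyfun (n * (n - 1)) 1 (\<lambda>y. (if a = b then [:0, 1:] else 0)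
        + (-1) * of_int (mat_of_parts n y (\<lambda>_. 0) $$ (a, b)) :: int poly)"
      using that by (intro polyfun_add polyfun_const polyfun_cmult polyfun_mat_of_parts_index)
    then show ?thesis
      using that by (simp add: char_poly_matrix_index[OF mat_of_parts_carrier] of_int_poly)
  qed
  then have "polyfun (n * (n - 1)) ((n - 1) * 1) (\<lambda>y. cp_cofactor n y i)"
    unfolding cp_cofactor_def using assms by (intro polyfun_cofactor) auto
  then show ?thesis
    by (intro polyfun_coeff) simp
qed

lemma polyfun_det_cp_coeff_mat: "polyfun (n * (n - 1)) (n * (n - 1)) (\<lambda>y. det (cp_coeff_mat n y))"
proof (rule polyfun_det)
  show "cp_coeff_mat n y \<in> carrier_mat n n" for y
    by (simp add: cp_coeff_mat_def)
  fix k i assume "k < n" "i < n"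
  with polyfun_coeff_cp_cofactor[OF \<open>i < n\<close>, of k]
  show "polyfun (n * (n - 1)) (n - 1) (\<lambda>y. cp_coeff_mat n y $$ (k, i))"
    by (simp add: cp_coeff_mat_def)
qed

section \<open>The companion matrix\<close>

definition companion_mat :: "nat \<Rightarrow> (nat \<Rightarrow> int) \<Rightarrow> int mat" where
  "companion_mat n z = mat n n (\<lambda>(i, j). if j < n - 1 then (if i = j + 1 then 1 else 0) else z i)"

lemma companion_mat_carrier [simp]: "companion_mat n z \<in> carrier_mat n n"
  by (simp add: companion_mat_def)

lemma companion_mat_dims [simp]:
  "dim_row (companion_mat n z) = n" "dim_col (companion_mat n z) = n"
  by (simp_all add: companion_mat_def)

lemma companion_mat_index:
  "i < n \<Longrightarrow> j < n \<Longrightarrow>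
    companion_mat n z $$ (i, j) = (if j < n - 1 then (if i = j + 1 then 1 else 0) else z i)"
  by (simp add: companion_mat_def)

text \<open>The minor of \<open>X - C\<close> at the top right corner is upper triangular with diagonal -1.\<close>
lemma cofactor_char_poly_matrix_companion_mat:
  "cofactor (char_poly_matrix (companion_mat (Suc (Suc n)) z)) 0 (Suc n) = 1"
proof -
  let ?M = "char_poly_matrix (companion_mat (Suc (Suc n)) z)"
  define D where "D = mat_delete ?M 0 (Suc n)"
  have M: "?M \<in> carrier_mat (Suc (Suc n)) (Suc (Suc n))"
    by simp
  have D: "D \<in> carrier_mat (Suc n) (Suc n)"
    unfolding D_def using mat_delete_carrier[OF M] by simp
  have D_index: "D $$ (a, b) = (if b = Suc a then [:0, 1:] else 0) + [:- (if a = b then 1 else 0):]"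
    if "a < Suc n" "b < Suc n" for a b
    using that unfolding D_def
    by (simp add: mat_delete_index_carrier[OF M] char_poly_matrix_index[OF companion_mat_carrier]
        companion_mat_index)
  have "upper_triangular D"
    unfolding upper_triangular_def using D D_index by auto
  moreover have "diag_mat D = replicate (Suc n) [:-1:]"
  proof -
    have "diag_mat D = map (\<lambda>i. D $$ (i, i)) [0..<Suc n]"
      using D by (simp add: diag_mat_def)
    also have "\<dots> = map (\<lambda>i. [:-1:]) [0..<Suc n]"
      by (rule map_cong) (auto simp: D_index)
    also have "\<dots> = replicate (Suc n) [:-1:]"
      by (simp add: map_replicate_const)
    finally show ?thesis .
  qed
  ultimately have "det D = [:-1:] ^ Suc n"
    using det_upper_triangular[OF _ D] by simp
  then have "det D = (-1) ^ Suc n"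
    by (simp add: one_pCons)
  then show ?thesis
    unfolding cofactor_def D_def[symmetric] by (simp flip: power_mult_distrib)
qed

lemma char_poly_companion_mat_Suc:
  "char_poly (companion_mat (Suc (Suc n)) z)
    = [:0, 1:] * char_poly (companion_mat (Suc n) (\<lambda>i. z (Suc i))) + [:- z 0:]"
proof -
  let ?M = "char_poly_matrix (companion_mat (Suc (Suc n)) z)"
  have row0: "?M $$ (0, j) = (if j = 0 then [:0, 1:] else if j = Suc n then [:- z 0:] else 0)"
    if "j < Suc (Suc n)" for j
    using that by (simp add: char_poly_matrix_index[OF companion_mat_carrier] companion_mat_index)
  have M: "?M \<in> carrier_mat (Suc (Suc n)) (Suc (Suc n))"
    by simp
  have "mat_delete ?M 0 0 = char_poly_matrix (companion_mat (Suc n) (\<lambda>i. z (Suc i)))"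
  proof (rule eq_matI)
    fix a b assume "a < dim_row (char_poly_matrix (companion_mat (Suc n) (\<lambda>i. z (Suc i))))"
      "b < dim_col (char_poly_matrix (companion_mat (Suc n) (\<lambda>i. z (Suc i))))"
    then have "a < Suc n" "b < Suc n"
      by (auto simp: char_poly_matrix_def)
    then show "mat_delete ?M 0 0 $$ (a, b)
        = char_poly_matrix (companion_mat (Suc n) (\<lambda>i. z (Suc i))) $$ (a, b)"
      by (simp add: mat_delete_index_carrier[OF M] char_poly_matrix_index[OF companion_mat_carrier]
          companion_mat_index)
  qed (auto simp: char_poly_matrix_def mat_delete_def)
  then have cof0: "cofactor ?M 0 0 = char_poly (companion_mat (Suc n) (\<lambda>i. z (Suc i)))"
    by (simp add: cofactor_def char_poly_def)
  have "char_poly (companion_mat (Suc (Suc n)) z) = (\<Sum>j<Suc (Suc n). ?M $$ (0, j) * cofactor ?M 0 j)"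
    unfolding char_poly_def by (rule laplace_expansion_row) auto
  also have "\<dots> = (\<Sum>j<Suc n. ?M $$ (0, j) * cofactor ?M 0 j)
      + ?M $$ (0, Suc n) * cofactor ?M 0 (Suc n)"
    by simp
  also have "(\<Sum>j<Suc n. ?M $$ (0, j) * cofactor ?M 0 j)
      = ?M $$ (0, 0) * cofactor ?M 0 0 + (\<Sum>j<n. ?M $$ (0, Suc j) * cofactor ?M 0 (Suc j))"
    by (rule sum.lessThan_Suc_shift)
  also have "(\<Sum>j<n. ?M $$ (0, Suc j) * cofactor ?M 0 (Suc j)) = 0"
    by (rule sum.neutral) (simp add: row0)
  finally show ?thesis
    by (simp add: row0 cof0 cofactor_char_poly_matrix_companion_mat)
qed

lemma char_poly_companion_mat:
  "char_poly (companion_mat (Suc n) z) = monom 1 (Suc n) - (\<Sum>i<Suc n. monom (z i) i)"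
proof (induction n arbitrary: z)
  case 0
  let ?M = "char_poly_matrix (companion_mat 1 z)"
  have "char_poly (companion_mat 1 z) = (\<Sum>i<1. ?M $$ (i, 0) * cofactor ?M i 0)"
    unfolding char_poly_def by (rule laplace_expansion_column) auto
  also have "\<dots> = [:- z 0, 1:]"
    by (simp add: cofactor_def mat_delete_carrier[of _ 1 1, simplified]
        char_poly_matrix_index[OF companion_mat_carrier] companion_mat_index)
  finally show ?case
    by (intro poly_eqI) (simp add: coeff_sum coeff_pCons split: nat.splits)
next
  case (Suc n)
  show ?case
    unfolding char_poly_companion_mat_Suc Suc.IH
    by (rule poly_eqI) (simp add: coeff_sum coeff_pCons split: nat.splits)
qed

definition companion_block :: "nat \<Rightarrow> nat \<Rightarrow> int" where
  "companion_block n = (\<lambda>t\<in>{..<n * (n - 1)}. if t div (n - 1) = t mod (n - 1) + 1 then 1 else 0)"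

definition identity_block :: "nat \<Rightarrow> nat \<Rightarrow> int" where
  "identity_block n = (\<lambda>t\<in>{..<n * (n - 1)}. if t div (n - 1) = t mod (n - 1) then 1 else 0)"

lemma zero_one_vec_Fp_vecs: "1 < p \<Longrightarrow> (\<lambda>t\<in>{..<m}. if P t then 1 else 0) \<in> Fp_vecs m p"
  unfolding Fp_vecs_def restrict_PiE_iff by simp

lemma mat_of_parts_companion_block: "mat_of_parts n (companion_block n) z = companion_mat n z"
proof (rule eq_matI)
  fix i j assume "i < dim_row (companion_mat n z)" "j < dim_col (companion_mat n z)"
  then have i: "i < n" and j: "j < n"
    by auto
  show "mat_of_parts n (companion_block n) z $$ (i, j) = companion_mat n z $$ (i, j)"
  proof (cases "j < n - 1")
    case True
    then show ?thesis
      using i j block_index_less[OF i True]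
      by (simp add: mat_of_parts_index companion_mat_index companion_block_def)
  qed (use i j in \<open>simp add: mat_of_parts_index companion_mat_index\<close>)
qed auto

lemma cp_coeff_mat_companion_block:
  assumes "0 < n"
  shows "cp_coeff_mat n (companion_block n) = 1\<^sub>m n"
proof (rule eq_matI)
  fix k i assume "k < dim_row (1\<^sub>m n)" "i < dim_col (1\<^sub>m n)"
  then have k: "k < n" and i: "i < n" by auto
  let ?P = "cp_cofactor n (companion_block n)"
  have cp: "coeff (char_poly (mat_of_parts n (companion_block n) z)) k = - z k" for z
  proof -
    have "Suc (n - 1) = n" using assms by simp
    with char_poly_companion_mat[of "n - 1" z] k show ?thesis
      by (simp add: mat_of_parts_companion_block coeff_sum)
  qed
  define e where "e j = (if j = i then 1 else 0 :: int)" for j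
  have "(\<Sum>j<n. e j * coeff (?P j) k) = (\<Sum>j<n. if j = i then coeff (?P j) k else 0)"
    by (rule sum.cong) (simp_all add: e_def)
  also have "\<dots> = coeff (?P i) k"
    using i by simp
  finally have "(\<Sum>j<n. e j * coeff (?P j) k) = coeff (?P i) k" .
  then have "coeff (?P i) k = e k"
    using cp[of e] cp[of "\<lambda>_. 0"] coeff_char_poly_mat_of_parts[OF assms, of _ _ k] by simp
  with k i show "cp_coeff_mat n (companion_block n) $$ (k, i) = 1\<^sub>m n $$ (k, i)"
    by (simp add: cp_coeff_mat_def e_def)
qed (auto simp: cp_coeff_mat_def)

lemma det_cofactor_identity_block: "det_cofactor n (identity_block n) (n - 1) = 1"
proof -
  have "mat_delete (mat_of_parts n (identity_block n) (\<lambda>_. 0)) (n - 1) (n - 1) = 1\<^sub>m (n - 1)"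
  proof (rule eq_matI)
    fix a b assume "a < dim_row (1\<^sub>m (n - 1))" "b < dim_col (1\<^sub>m (n - 1))"
    then have a: "a < n - 1" and b: "b < n - 1"
      by auto
    then have "a < n"
      by simp
    with a b block_index_less[OF this b]
    show "mat_delete (mat_of_parts n (identity_block n) (\<lambda>_. 0)) (n - 1) (n - 1) $$ (a, b)
        = 1\<^sub>m (n - 1) $$ (a, b)"
      by (simp add: mat_delete_index_carrier[OF mat_of_parts_carrier] mat_of_parts_index
          identity_block_def)
  qed (auto simp: mat_delete_def)
  then show ?thesis
    by (simp add: det_cofactor_def cofactor_def)
qed

lemma Fp_vecs_upd_less:
  "w \<in> Fp_vecs n p \<Longrightarrow> i < n \<Longrightarrow> t \<in> {0..<int p} \<Longrightarrow> w(i := t) \<in> Fp_vecs n p"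
  by (auto simp: Fp_vecs_def PiE_iff extensional_def)

lemma card_Fp_vecs_fix_coord:
  assumes i0: "i0 < n" and a: "a \<in> {0..<int p}"
  shows "card {z \<in> Fp_vecs n p. z i0 = a} = p ^ (n - 1)"
proof -
  let ?T = "\<lambda>i. if i = i0 then {a} else {0..<int p}"
  have "{z \<in> Fp_vecs n p. z i0 = a} = PiE {..<n} ?T"
  proof (intro equalityI subsetI)
    fix z assume "z \<in> {z \<in> Fp_vecs n p. z i0 = a}"
    then show "z \<in> PiE {..<n} ?T"
      by (auto simp: Fp_vecs_def PiE_iff)
  next
    fix z assume z: "z \<in> PiE {..<n} ?T"
    have z_T: "z i \<in> ?T i" if "i < n" for i
      using PiE_mem[OF z] that by simp
    have "z i \<in> {0..<int p}" if "i < n" for i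
      using z_T[OF that] a by (cases "i = i0") auto
    moreover have "z i0 = a"
      using z_T[OF i0] by simp
    ultimately show "z \<in> {z \<in> Fp_vecs n p. z i0 = a}"
      using z by (simp add: Fp_vecs_def PiE_iff)
  qed
  then have "card {z \<in> Fp_vecs n p. z i0 = a} = (\<Prod>i<n. card (?T i))"
    by (simp add: card_PiE)
  also have "\<dots> = card (?T i0) * (\<Prod>i\<in>{..<n} - {i0}. card (?T i))"
    using i0 by (intro prod.remove) auto
  also have "(\<Prod>i\<in>{..<n} - {i0}. card (?T i)) = (\<Prod>i\<in>{..<n} - {i0}. p)"
    by (rule prod.cong) auto
  finally show ?thesis
    using i0 by simp
qed

lemma sum_fun_upd_mult:
  fixes w D :: "nat \<Rightarrow> int"
  assumes "i0 < n"
  shows "(\<Sum>i<n. (w(i0 := t)) i * D i) = (\<Sum>i<n. w i * D i) + (t - w i0) * D i0"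
proof -
  have "(\<Sum>i<n. (w(i0 := t)) i * D i)
      = (\<Sum>i<n. w i * D i + (if i = i0 then (t - w i0) * D i0 else 0))"
    by (rule sum.cong) (auto simp: algebra_simps)
  also have "\<dots> = (\<Sum>i<n. w i * D i) + (t - w i0) * D i0"
    using assms by (simp add: sum.distrib)
  finally show ?thesis .
qed

lemma cong_linear_iff:
  fixes s t u d m :: int
  assumes "[d * u = 1] (mod m)"
  shows "[s + t * d = 1] (mod m) \<longleftrightarrow> [t = (1 - s) * u] (mod m)"
  unfolding cong_iff_dvd_diff
proof
  have du: "m dvd d * u - 1"
    using assms by (simp add: cong_iff_dvd_diff)
  show "m dvd t - (1 - s) * u" if "m dvd s + t * d - 1"
  proof -
    have eq: "t - (1 - s) * u = u * (s + t * d - 1) - t * (d * u - 1)"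
      by (simp add: algebra_simps)
    show ?thesis
      unfolding eq by (rule dvd_diff[OF dvd_mult[where b = u, OF that] dvd_mult[where b = t, OF du]])
  qed
  show "m dvd s + t * d - 1" if "m dvd t - (1 - s) * u"
  proof -
    have eq: "s + t * d - 1 = d * (t - (1 - s) * u) + (1 - s) * (d * u - 1)"
      by (simp add: algebra_simps)
    show ?thesis
      unfolding eq by (rule dvd_add[OF dvd_mult[where b = d, OF that] dvd_mult[where b = "1 - s", OF du]])
  qed
qed

lemma cong_linear_fun_upd_iff:
  fixes w D :: "nat \<Rightarrow> int"
  assumes "i0 < n" "w i0 = 0" "[D i0 * u = 1] (mod m)"
  shows "[(\<Sum>i<n. (w(i0 := t)) i * D i) = 1] (mod m)
    \<longleftrightarrow> [t = (1 - (\<Sum>i<n. w i * D i)) * u] (mod m)"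
proof -
  have "(\<Sum>i<n. (w(i0 := t)) i * D i) = (\<Sum>i<n. w i * D i) + t * D i0"
    using sum_fun_upd_mult[OF assms(1), of w t D] assms(2) by simp
  then show ?thesis
    by (simp only: cong_linear_iff[OF assms(3)])
qed

text \<open>Since \<open>D i0\<close> is invertible modulo p, the solutions are parametrized by their other
  coordinates.\<close>
lemma card_linear_cong_solutions:
  assumes p: "prime p" and i0: "i0 < n" and D: "\<not> int p dvd D i0"
  shows "card {z \<in> Fp_vecs n p. [(\<Sum>i<n. z i * D i) = 1] (mod int p)} = p ^ (n - 1)"
proof -
  have "coprime (int p) (D i0)"
    using p D by (intro prime_imp_coprime) simp_all
  then have "coprime (D i0) (int p)"
    by (simp add: coprime_commute)
  then obtain u where u: "[D i0 * u = 1] (mod int p)"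
    using cong_solve_coprime_int by blast
  have p0: "0 < p"
    using p prime_gt_0_nat by blast
  define sol where "sol w = ((1 - (\<Sum>i<n. w i * D i)) * u) mod int p" for w
  let ?S = "{z \<in> Fp_vecs n p. [(\<Sum>i<n. z i * D i) = 1] (mod int p)}"
  let ?T = "{w \<in> Fp_vecs n p. w i0 = 0}"
  have sol_range: "sol w \<in> {0..<int p}" for w
    using p0 by (simp add: sol_def)
  have S_iff: "[(\<Sum>i<n. (w(i0 := t)) i * D i) = 1] (mod int p) \<longleftrightarrow> t = sol w"
    if "w \<in> ?T" "t \<in> {0..<int p}" for w t
  proof -
    from that have "w i0 = 0"
      by simp
    from cong_linear_fun_upd_iff[where w = w and D = D and t = t, OF i0 this u] that show ?thesis
      by (simp add: sol_def cong_def)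
  qed
  have "?S = (\<lambda>w. w(i0 := sol w)) ` ?T"
  proof (intro equalityI subsetI)
    fix z assume z: "z \<in> ?S"
    then have "z \<in> Fp_vecs n p"
      by simp
    then have T: "z(i0 := 0) \<in> ?T"
      using p0 i0 by (simp add: Fp_vecs_upd_less)
    have zi0: "z i0 \<in> {0..<int p}"
      using Fp_vecs_range[OF \<open>z \<in> Fp_vecs n p\<close> i0] .
    have "(z(i0 := 0))(i0 := z i0) = z"
      by simp
    with z S_iff[OF T zi0] have "z i0 = sol (z(i0 := 0))"
      by simp
    then have "z = (z(i0 := 0))(i0 := sol (z(i0 := 0)))"
      by (intro ext) simp
    from image_eqI[where f = "\<lambda>w. w(i0 := sol w)", OF this T]
    show "z \<in> (\<lambda>w. w(i0 := sol w)) ` ?T" .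
  next
    fix z assume "z \<in> (\<lambda>w. w(i0 := sol w)) ` ?T"
    then obtain w where w: "w \<in> ?T" "z = w(i0 := sol w)"
      by blast
    with S_iff[OF w(1) sol_range] show "z \<in> ?S"
      using i0 sol_range by (simp add: Fp_vecs_upd_less)
  qed
  moreover have "inj_on (\<lambda>w. w(i0 := sol w)) ?T"
  proof (rule inj_onI)
    fix w w' assume w: "w \<in> ?T" and w': "w' \<in> ?T" and eq: "w(i0 := sol w) = w'(i0 := sol w')"
    show "w = w'"
    proof
      fix i
      show "w i = w' i"
        using fun_cong[OF eq, of i] w w' by (cases "i = i0") auto
    qed
  qed
  ultimately have "card ?S = card ?T"
    by (simp add: card_image)
  also have "\<dots> = p ^ (n - 1)"
    using i0 p0 by (simp add: card_Fp_vecs_fix_coord)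
  finally show ?thesis .
qed

lemma card_linear_cong_solutions_le:
  assumes p: "prime p"
  shows "card {z \<in> Fp_vecs n p. [(\<Sum>i<n. z i * D i) = 1] (mod int p)} \<le> p ^ (n - 1)"
proof (cases "\<exists>i0<n. \<not> int p dvd D i0")
  case True
  then obtain i0 where "i0 < n" "\<not> int p dvd D i0"
    by blast
  with card_linear_cong_solutions[OF p] show ?thesis
    by simp
next
  case False
  have "{z \<in> Fp_vecs n p. [(\<Sum>i<n. z i * D i) = 1] (mod int p)} = {}"
  proof (intro equals0I)
    fix z assume "z \<in> {z \<in> Fp_vecs n p. [(\<Sum>i<n. z i * D i) = 1] (mod int p)}"
    moreover have "int p dvd (\<Sum>i<n. z i * D i)"
      using False by (intro dvd_sum) auto
    ultimately have "int p dvd 1"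
      by (metis (no_types, lifting) cong_dvd_iff mem_Collect_eq)
    with p show False
      by (simp add: prime_gt_1_nat)
  qed
  then show ?thesis
    by (metis card.empty zero_le)
qed

section \<open>Characteristic polynomials with a factor of constant term 1\<close>

definition monic_of_coeffs :: "nat \<Rightarrow> (nat \<Rightarrow> int) \<Rightarrow> int poly" where
  "monic_of_coeffs n c = monom 1 n + (\<Sum>k<n. monom (c k) k)"

lemma coeff_monic_of_coeffs:
  "coeff (monic_of_coeffs n c) k = (if k = n then 1 else 0) + (if k < n then c k else 0)"
  by (simp add: monic_of_coeffs_def coeff_sum)

lemma monic_of_coeffs_degree:
  "degree (monic_of_coeffs n c) = n" "lead_coeff (monic_of_coeffs n c) = 1"
proof -
  have "degree (monic_of_coeffs n c) \<le> n"
    by (rule degree_le) (simp add: coeff_monic_of_coeffs)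
  moreover have "n \<le> degree (monic_of_coeffs n c)"
    by (rule le_degree) (simp add: coeff_monic_of_coeffs)
  ultimately show "degree (monic_of_coeffs n c) = n"
    by simp
  then show "lead_coeff (monic_of_coeffs n c) = 1"
    by (simp add: coeff_monic_of_coeffs)
qed

definition coeffs_mod :: "nat \<Rightarrow> nat \<Rightarrow> int poly \<Rightarrow> nat \<Rightarrow> int" where
  "coeffs_mod n p f = (\<lambda>k\<in>{..<n}. coeff f k mod int p)"

lemma coeffs_mod_Fp_vecs: "0 < p \<Longrightarrow> coeffs_mod n p f \<in> Fp_vecs n p"
  unfolding coeffs_mod_def Fp_vecs_def restrict_PiE_iff by simp

lemma eq_coeffs_mod_if_cong:
  assumes "c \<in> Fp_vecs n p" "0 < p" "\<And>i. i < n \<Longrightarrow> [c i = coeff f i] (mod int p)"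
  shows "c = coeffs_mod n p f"
proof (rule Fp_vecs_eq_if_cong[OF assms(1) coeffs_mod_Fp_vecs[OF assms(2)]])
  fix i assume "i < n"
  with assms(3)[OF this] show "[c i = coeffs_mod n p f i] (mod int p)"
    by (simp add: coeffs_mod_def cong_def)
qed

lemma cong_monic_of_coeffs_mod:
  assumes "lead_coeff f = 1" "degree f = d"
  shows "[coeff f k = coeff (monic_of_coeffs d (coeffs_mod d p f)) k] (mod int p)"
  using assms
  by (cases k d rule: linorder_cases)
    (simp_all add: coeff_monic_of_coeffs coeffs_mod_def cong_def coeff_eq_0)

lemma cong_coeff_mult:
  assumes "\<And>i. [coeff a i = coeff a' i] (mod m)" "\<And>i. [coeff b i = coeff b' i] (mod m)"
  shows "[coeff (a * b) k = coeff (a' * b') k] (mod m)"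
  unfolding coeff_mult by (intro cong_sum cong_mult assms)

text \<open>The characteristic polynomials of the matrices in \<open>X_p n p\<close>, as coefficient vectors modulo p;
  the condition on \<open>c 0\<close> comes from the constant term \<open>(-1)^n det A\<close>.\<close>
definition X_char_coeffs :: "nat \<Rightarrow> nat \<Rightarrow> (nat \<Rightarrow> int) set" where
  "X_char_coeffs n p = {c \<in> Fp_vecs n p. c 0 = (-1) ^ n mod int p \<and>
    (\<exists>q. lead_coeff q = 1 \<and> 1 \<le> degree q \<and> degree q \<le> n - 1 \<and> coeff q 0 = 1
      \<and> dvd_mod_p p q (monic_of_coeffs n c))}"

lemma monic_cofactor_if_cong:
  fixes F q s :: "int poly" and m :: int
  assumes m: "1 < m" and F: "lead_coeff F = 1" "degree F = n" and q: "lead_coeff q = 1"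
    and lc_s: "lead_coeff s \<in> {0<..<m}"
    and qs: "\<And>i. [coeff F i = coeff (q * s) i] (mod m)"
  shows "lead_coeff s = 1" "degree s = n - degree q"
proof -
  have not_cong: "\<not> [1 = 0] (mod m)"
    using m by (simp add: cong_def)
  have "q \<noteq> 0" "s \<noteq> 0"
    using q lc_s by auto
  then have deg_qs: "degree (q * s) = degree q + degree s"
    by (simp add: degree_mult_eq)
  have lc_qs: "lead_coeff (q * s) = lead_coeff s"
    using q by (simp add: lead_coeff_mult)
  have deg: "degree q + degree s = n"
  proof (rule ccontr)
    assume ne: "degree q + degree s \<noteq> n"
    show False
    proof (cases "n < degree q + degree s")
      case True
      then have "[0 = lead_coeff s] (mod m)"
        using qs[of "degree q + degree s"] F deg_qs lc_qs by (simp add: coeff_eq_0)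
      with lc_s show False
        by (simp add: cong_def)
    next
      case False
      with ne deg_qs have "coeff (q * s) n = 0"
        by (simp add: coeff_eq_0)
      with qs[of n] F not_cong show False
        by simp
    qed
  qed
  then have "[1 = lead_coeff s] (mod m)"
    using qs[of n] F lc_qs deg_qs by simp
  with lc_s m show "lead_coeff s = 1"
    by (simp add: cong_def)
  from deg show "degree s = n - degree q"
    by simp
qed

lemma monic_cofactor_mod_prime:
  fixes F q r :: "int poly"
  assumes p: "prime p" and F: "lead_coeff F = 1" "degree F = n" and q: "lead_coeff q = 1"
    and qr: "\<And>i. [coeff F i = coeff (q * r) i] (mod int p)"
  shows "\<exists>s. lead_coeff s = 1 \<and> degree s = n - degree q \<and>
    (\<forall>i. [coeff F i = coeff (q * s) i] (mod int p))"
proof -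
  have p1: "1 < int p"
    using prime_gt_1_nat[OF p] by simp
  define s where "s = map_poly (\<lambda>a. a mod int p) r"
  have coeff_s: "coeff s i = coeff r i mod int p" for i
    unfolding s_def by (simp add: coeff_map_poly)
  have qs: "[coeff F i = coeff (q * s) i] (mod int p)" for i
  proof -
    have "[coeff (q * r) i = coeff (q * s) i] (mod int p)"
      by (rule cong_coeff_mult) (simp_all add: coeff_s cong_def)
    then show ?thesis
      using qr[of i] cong_trans by blast
  qed
  have "s \<noteq> 0"
    using qs[of n] F p1 by (auto simp: cong_def)
  then have "lead_coeff s \<noteq> 0"
    by simp
  moreover have "lead_coeff s \<in> {0..<int p}"
    unfolding coeff_s using p1 by simp
  ultimately have "lead_coeff s \<in> {0<..<int p}"
    by auto
  with monic_cofactor_if_cong[OF p1 F q _ qs] qs show ?thesis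
    by blast
qed

lemma X_char_coeffs_subset:
  assumes p: "prime p"
  shows "X_char_coeffs n p \<subseteq> (\<Union>d\<in>{1..n - 1}.
    (\<lambda>(a, b). coeffs_mod n p (monic_of_coeffs d a * monic_of_coeffs (n - d) b))
      ` ({a \<in> Fp_vecs d p. a 0 = 1} \<times> {b \<in> Fp_vecs (n - d) p. b 0 = (-1) ^ n mod int p}))"
proof
  fix c assume c: "c \<in> X_char_coeffs n p"
  then have c_vec: "c \<in> Fp_vecs n p" and c0: "c 0 = (-1) ^ n mod int p"
    by (simp_all add: X_char_coeffs_def)
  from c obtain q where q: "lead_coeff q = 1" "1 \<le> degree q" "degree q \<le> n - 1" "coeff q 0 = 1"
    and "dvd_mod_p p q (monic_of_coeffs n c)"
    unfolding X_char_coeffs_def by blast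
  then obtain r where qr: "\<And>i. [coeff (monic_of_coeffs n c) i = coeff (q * r) i] (mod int p)"
    unfolding dvd_mod_p_def by blast
  note F = monic_of_coeffs_degree(2,1)[of n c]
  obtain s where s: "lead_coeff s = 1" "degree s = n - degree q"
    and qs: "\<And>i. [coeff (monic_of_coeffs n c) i = coeff (q * s) i] (mod int p)"
    using monic_cofactor_mod_prime[OF p F q(1) qr] by blast
  define d where "d = degree q"
  define a where "a = coeffs_mod d p q"
  define b where "b = coeffs_mod (n - d) p s"
  have p1: "1 < int p"
    using prime_gt_1_nat[OF p] by simp
  have d: "d \<in> {1..n - 1}" "0 < n - d"
    using q(2,3) unfolding d_def by auto
  have p0: "0 < p"
    using p by (rule prime_gt_0_nat)
  have "a \<in> Fp_vecs d p"
    using p0 by (simp add: a_def coeffs_mod_Fp_vecs)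
  moreover have "a 0 = 1"
    using d p1 q(4) by (simp add: a_def coeffs_mod_def d_def)
  ultimately have a: "a \<in> {a \<in> Fp_vecs d p. a 0 = 1}"
    by simp
  have "[coeff s 0 = coeff (monic_of_coeffs n c) 0] (mod int p)"
    using cong_sym[OF qs[of 0]] q(4) by (simp add: coeff_mult_0)
  then have "b 0 = (-1) ^ n mod int p"
    using d c0 by (simp add: b_def coeffs_mod_def coeff_monic_of_coeffs cong_def)
  then have b: "b \<in> {b \<in> Fp_vecs (n - d) p. b 0 = (-1) ^ n mod int p}"
    using p0 by (simp add: b_def coeffs_mod_Fp_vecs)
  have qs_ab: "[coeff (q * s) k = coeff (monic_of_coeffs d a * monic_of_coeffs (n - d) b) k] (mod int p)"
    for k
    unfolding a_def b_def d_def
    by (intro cong_coeff_mult cong_monic_of_coeffs_mod) (use q(1) s in simp_all)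
  have "c = coeffs_mod n p (monic_of_coeffs d a * monic_of_coeffs (n - d) b)"
  proof (rule eq_coeffs_mod_if_cong[OF c_vec p0])
    fix i assume "i < n"
    then have "[c i = coeff (q * s) i] (mod int p)"
      using qs[of i] by (simp add: coeff_monic_of_coeffs)
    with qs_ab[of i] show "[c i = coeff (monic_of_coeffs d a * monic_of_coeffs (n - d) b) i] (mod int p)"
      using cong_trans by blast
  qed
  then have "c \<in> (\<lambda>(a, b). coeffs_mod n p (monic_of_coeffs d a * monic_of_coeffs (n - d) b))
      ` ({a \<in> Fp_vecs d p. a 0 = 1} \<times> {b \<in> Fp_vecs (n - d) p. b 0 = (-1) ^ n mod int p})"
    using a b by (intro image_eqI[where x = "(a, b)"]) simp_all
  with d(1) show "c \<in> (\<Union>d\<in>{1..n - 1}.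
    (\<lambda>(a, b). coeffs_mod n p (monic_of_coeffs d a * monic_of_coeffs (n - d) b))
      ` ({a \<in> Fp_vecs d p. a 0 = 1} \<times> {b \<in> Fp_vecs (n - d) p. b 0 = (-1) ^ n mod int p}))"
    by (rule UN_I)
qed

lemma card_X_char_coeffs:
  assumes p: "prime p"
  shows "card (X_char_coeffs n p) \<le> (n - 1) * p ^ (n - 2)"
proof -
  have p1: "1 < int p"
    using prime_gt_1_nat[OF p] by simp
  have card_d: "card ({a \<in> Fp_vecs d p. a 0 = 1} \<times> {b \<in> Fp_vecs (n - d) p. b 0 = (-1) ^ n mod int p})
      = p ^ (n - 2)" if "d \<in> {1..n - 1}" for d
  proof -
    have d: "0 < d" "0 < n - d"
      using that by auto
    have "card {a \<in> Fp_vecs d p. a 0 = 1} = p ^ (d - 1)"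
      using card_Fp_vecs_fix_coord[OF d(1), of 1 p] p1 by simp
    moreover have "card {b \<in> Fp_vecs (n - d) p. b 0 = (-1) ^ n mod int p} = p ^ (n - d - 1)"
      using card_Fp_vecs_fix_coord[OF d(2), of "(-1) ^ n mod int p" p] p1 by simp
    moreover have "d - 1 + (n - d - 1) = n - 2"
      using that by auto
    ultimately show ?thesis
      by (metis card_cartesian_product power_add)
  qed
  have "card (X_char_coeffs n p) \<le> card (\<Union>d\<in>{1..n - 1}.
    (\<lambda>(a, b). coeffs_mod n p (monic_of_coeffs d a * monic_of_coeffs (n - d) b))
      ` ({a \<in> Fp_vecs d p. a 0 = 1} \<times> {b \<in> Fp_vecs (n - d) p. b 0 = (-1) ^ n mod int p}))"
    by (intro card_mono X_char_coeffs_subset[OF p]) auto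
  also have "\<dots> \<le> (\<Sum>d\<in>{1..n - 1}. card
      ({a \<in> Fp_vecs d p. a 0 = 1} \<times> {b \<in> Fp_vecs (n - d) p. b 0 = (-1) ^ n mod int p}))"
    by (intro order_trans[OF card_UN_le] sum_mono card_image_le) auto
  also have "\<dots> = (\<Sum>d\<in>{1..n - 1}. p ^ (n - 2))"
    by (rule sum.cong[OF refl card_d])
  also have "\<dots> = (n - 1) * p ^ (n - 2)"
    by simp
  finally show ?thesis .
qed

lemma coeff_char_poly_0:
  assumes A: "(A :: int mat) \<in> carrier_mat n n"
  shows "coeff (char_poly A) 0 = (-1) ^ n * det A"
proof -
  have "poly (det (char_poly_matrix A)) 0 = det ((-1) \<cdot>\<^sub>m A)"
    by (rule poly_det_cong[of _ n]) (use A in \<open>auto simp: char_poly_matrix_index\<close>)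
  then show ?thesis
    using A by (simp add: char_poly_def poly_0_coeff_0 det_smult)
qed

lemma coeffs_mod_char_poly_X_p:
  assumes p: "prime p" and X: "A \<in> X_p n p"
  shows "coeffs_mod n p (char_poly A) \<in> X_char_coeffs n p"
proof -
  let ?c = "coeffs_mod n p (char_poly A)"
  obtain q where q: "lead_coeff q = 1" "1 \<le> degree q" "degree q \<le> n - 1" "coeff q 0 = 1"
    and "dvd_mod_p p q (char_poly A)"
    using X unfolding X_p_def by blast
  then obtain r where r: "\<And>i. [coeff (char_poly A) i = coeff (q * r) i] (mod int p)"
    unfolding dvd_mod_p_def by blast
  have A: "A \<in> carrier_mat n n" and det: "[det A = 1] (mod int p)"
    using X by (auto simp: X_p_def SL_Fp_def Fp_mats_def)
  have cp: "lead_coeff (char_poly A) = 1" "degree (char_poly A) = n"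
    using degree_monic_char_poly[OF A] by auto
  have "0 < n"
    using q(2,3) by simp
  have "[(-1) ^ n * det A = (-1) ^ n * 1] (mod int p)"
    by (intro cong_mult cong_refl det)
  then have "?c 0 = (-1) ^ n mod int p"
    using \<open>0 < n\<close> by (simp add: coeffs_mod_def coeff_char_poly_0[OF A] cong_def)
  moreover have "dvd_mod_p p q (monic_of_coeffs n ?c)"
    unfolding dvd_mod_p_def
    using cong_trans[OF cong_sym[OF cong_monic_of_coeffs_mod[OF cp]] r] by blast
  moreover have "?c \<in> Fp_vecs n p"
    using p by (simp add: coeffs_mod_Fp_vecs prime_gt_0_nat)
  ultimately show ?thesis
    using q by (auto simp: X_char_coeffs_def)
qed

lemma dvd_det_mult_if_dvd_mult_mat_vec:
  fixes L :: "int mat"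
  assumes L: "L \<in> carrier_mat n n" and w: "w \<in> carrier_vec n"
    and dvd: "\<And>k. k < n \<Longrightarrow> m dvd (L *\<^sub>v w) $ k" and j: "j < n"
  shows "m dvd det L * w $ j"
proof -
  have "det L * w $ j = ((det L \<cdot>\<^sub>m 1\<^sub>m n) *\<^sub>v w) $ j"
    using w j by simp
  also have "\<dots> = (adj_mat L *\<^sub>v (L *\<^sub>v w)) $ j"
    using adj_mat[OF L] L w by (metis assoc_mult_mat_vec)
  also have "\<dots> = (\<Sum>k<n. adj_mat L $$ (j, k) * (L *\<^sub>v w) $ k)"
    using adj_mat(1)[OF L] L j by (simp add: scalar_prod_def atLeast0LessThan)
  also have "m dvd \<dots>"
    using dvd by (intro dvd_sum dvd_mult) auto
  finally show ?thesis .
qed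

text \<open>The coefficients of the characteristic polynomial are affine in z with linear part
  \<open>cp_coeff_mat n y\<close>, which the adjugate inverts modulo p.\<close>
lemma inj_on_coeffs_mod_char_poly:
  assumes p: "prime p" and n: "0 < n" and L: "\<not> int p dvd det (cp_coeff_mat n y)"
  shows "inj_on (\<lambda>z. coeffs_mod n p (char_poly (mat_of_parts n y z))) (Fp_vecs n p)"
proof (rule inj_onI)
  fix z z' assume z: "z \<in> Fp_vecs n p" and z': "z' \<in> Fp_vecs n p"
    and eq: "coeffs_mod n p (char_poly (mat_of_parts n y z))
      = coeffs_mod n p (char_poly (mat_of_parts n y z'))"
  let ?L = "cp_coeff_mat n y" and ?w = "vec n z - vec n z'"
  have L_carrier: "?L \<in> carrier_mat n n"
    by (simp add: cp_coeff_mat_def)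
  have "int p dvd (?L *\<^sub>v ?w) $ k" if k: "k < n" for k
  proof -
    have "coeff (char_poly (mat_of_parts n y z)) k mod int p
        = coeff (char_poly (mat_of_parts n y z')) k mod int p"
      using fun_cong[OF eq, of k] k by (simp add: coeffs_mod_def)
    then have "int p dvd (?L *\<^sub>v vec n z') $ k - (?L *\<^sub>v vec n z) $ k"
      using k n by (simp add: coeff_char_poly_mat_of_parts_vec mod_eq_dvd_iff)
    then show ?thesis
      using k L_carrier by (simp add: mult_minus_distrib_mat_vec dvd_diff_commute)
  qed
  then have "int p dvd det ?L * ?w $ j" if "j < n" for j
    using that L_carrier by (intro dvd_det_mult_if_dvd_mult_mat_vec) auto
  then have "int p dvd z j - z' j" if "j < n" for j
    using that p L prime_dvd_mult_iff[of "int p"] by fastforce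
  then show "z = z'"
    using z z' by (intro Fp_vecs_eq_if_cong) (simp_all add: cong_iff_dvd_diff)
qed

lemma card_X_fiber_good:
  assumes p: "prime p" and n: "0 < n" and L: "\<not> int p dvd det (cp_coeff_mat n y)"
  shows "card {z \<in> Fp_vecs n p. mat_of_parts n y z \<in> X_p n p} \<le> card (X_char_coeffs n p)"
proof (rule card_inj_on_le)
  show "inj_on (\<lambda>z. coeffs_mod n p (char_poly (mat_of_parts n y z)))
      {z \<in> Fp_vecs n p. mat_of_parts n y z \<in> X_p n p}"
    by (rule inj_on_subset[OF inj_on_coeffs_mod_char_poly[OF p n L]]) auto
  show "(\<lambda>z. coeffs_mod n p (char_poly (mat_of_parts n y z)))
      ` {z \<in> Fp_vecs n p. mat_of_parts n y z \<in> X_p n p} \<subseteq> X_char_coeffs n p"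
    using coeffs_mod_char_poly_X_p[OF p] by auto
  show "finite (X_char_coeffs n p)"
    by (rule finite_subset[of _ "Fp_vecs n p"]) (auto simp: X_char_coeffs_def)
qed

lemma card_X_fiber_le:
  assumes p: "prime p" and n: "0 < n"
  shows "card {z \<in> Fp_vecs n p. mat_of_parts n y z \<in> X_p n p} \<le> p ^ (n - 1)"
proof -
  have "card {z \<in> Fp_vecs n p. mat_of_parts n y z \<in> X_p n p}
      \<le> card {z \<in> Fp_vecs n p. [(\<Sum>i<n. z i * det_cofactor n y i) = 1] (mod int p)}"
    by (rule card_mono) (auto simp: X_p_def SL_Fp_def det_mat_of_parts[OF n])
  also have "\<dots> \<le> p ^ (n - 1)"
    by (rule card_linear_cong_solutions_le[OF p])
  finally show ?thesis .
qed

lemma card_X_p_le: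
  assumes p: "prime p" and n: "2 \<le> n"
  shows "card (X_p n p) * p \<le> (n - 1 + n * (n - 1)) * (p ^ (n * (n - 1)) * p ^ (n - 1))"
proof -
  let ?M = "n * (n - 1)"
  let ?B = "{y \<in> Fp_vecs ?M p. int p dvd det (cp_coeff_mat n y)}"
  have n0: "0 < n"
    using n by simp
  have p1: "1 < p"
    using p prime_gt_1_nat by blast
  have bad: "card ?B * p \<le> ?M * p ^ ?M"
  proof (rule card_zeros_polyfun_mod_prime[OF polyfun_det_cp_coeff_mat p])
    show "companion_block n \<in> Fp_vecs ?M p"
      unfolding companion_block_def using p1 by (rule zero_one_vec_Fp_vecs)
    show "\<not> int p dvd det (cp_coeff_mat n (companion_block n))"
      using p1 by (simp add: cp_coeff_mat_companion_block[OF n0])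
  qed
  have "card (X_p n p) = card {A \<in> Fp_mats n p. A \<in> X_p n p}"
    by (rule arg_cong[where f = card]) (auto simp: X_p_def SL_Fp_def)
  also have "\<dots> = (\<Sum>y\<in>Fp_vecs ?M p. card {z \<in> Fp_vecs n p. mat_of_parts n y z \<in> X_p n p})"
    by (rule card_Fp_mats_filter)
  also have "\<dots> \<le> p ^ (n - 1) * card ?B + card (X_char_coeffs n p) * card (Fp_vecs ?M p)"
  proof (rule sum_le_if_bounds)
    fix y
    show "card {z \<in> Fp_vecs n p. mat_of_parts n y z \<in> X_p n p}
        \<le> (if int p dvd det (cp_coeff_mat n y) then p ^ (n - 1) else card (X_char_coeffs n p))"
      using card_X_fiber_le[OF p n0, of y] card_X_fiber_good[OF p n0, of y] by simp
  qed simp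
  also have "\<dots> \<le> p ^ (n - 1) * card ?B + (n - 1) * p ^ (n - 2) * p ^ ?M"
    using card_X_char_coeffs[OF p, of n] by (simp add: card_Fp_vecs)
  finally have "card (X_p n p) * p \<le> (p ^ (n - 1) * card ?B + (n - 1) * p ^ (n - 2) * p ^ ?M) * p"
    by simp
  also have "\<dots> = p ^ (n - 1) * (card ?B * p) + (n - 1) * (p ^ (n - 2) * p) * p ^ ?M"
    by (simp add: algebra_simps)
  also have "\<dots> \<le> p ^ (n - 1) * (?M * p ^ ?M) + (n - 1) * (p ^ (n - 2) * p) * p ^ ?M"
    using bad by simp
  also have "\<dots> = (n - 1 + ?M) * (p ^ ?M * p ^ (n - 1))"
  proof -
    have "n - 1 = Suc (n - 2)"
      using n by simp
    then have "p ^ (n - 2) * p = p ^ (n - 1)"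
      by (metis power_Suc2)
    then show ?thesis
      by (simp add: algebra_simps)
  qed
  finally show ?thesis .
qed

lemma card_SL_Fp_ge:
  assumes p: "prime p" and n: "0 < n"
  shows "(p - (n - 1)) * (p ^ (n * (n - 1)) * p ^ (n - 1)) \<le> card (SL_Fp n p) * p"
proof -
  let ?M = "n * (n - 1)"
  let ?B = "{y \<in> Fp_vecs ?M p. int p dvd det_cofactor n y (n - 1)}"
  let ?G = "{y \<in> Fp_vecs ?M p. \<not> int p dvd det_cofactor n y (n - 1)}"
  let ?fiber = "\<lambda>y. card {z \<in> Fp_vecs n p. [det (mat_of_parts n y z) = 1] (mod int p)}"
  have p1: "1 < p"
    using p prime_gt_1_nat by blast
  have bad: "card ?B * p \<le> (n - 1) * p ^ ?M"
  proof (rule card_zeros_polyfun_mod_prime[OF polyfun_det_cofactor p])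
    show "n - 1 < n"
      using n by simp
    show "identity_block n \<in> Fp_vecs ?M p"
      unfolding identity_block_def using p1 by (rule zero_one_vec_Fp_vecs)
    show "\<not> int p dvd det_cofactor n (identity_block n) (n - 1)"
      using p1 det_cofactor_identity_block[of n] by simp
  qed
  have "?G = Fp_vecs ?M p - ?B"
    by auto
  then have card_G: "card ?G = p ^ ?M - card ?B"
    by (simp add: card_Diff_subset card_Fp_vecs)
  have "(\<Sum>y\<in>?G. ?fiber y) = (\<Sum>y\<in>?G. p ^ (n - 1))"
  proof (rule sum.cong[OF refl])
    fix y assume "y \<in> ?G"
    then have D: "\<not> int p dvd det_cofactor n y (n - 1)"
      by simp
    have i0: "n - 1 < n"
      using n by simp
    show "?fiber y = p ^ (n - 1)"
      using card_linear_cong_solutions[where D = "det_cofactor n y", OF p i0 D] n by (simp add: det_mat_of_parts)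
  qed
  then have "p ^ (n - 1) * card ?G = (\<Sum>y\<in>?G. ?fiber y)"
    by simp
  also have "\<dots> \<le> (\<Sum>y\<in>Fp_vecs ?M p. ?fiber y)"
    by (rule sum_mono2) auto
  also have "\<dots> = card (SL_Fp n p)"
    unfolding SL_Fp_def by (rule card_Fp_mats_filter[symmetric])
  finally have good: "p ^ (n - 1) * card ?G \<le> card (SL_Fp n p)" .
  have "(p - (n - 1)) * (p ^ ?M * p ^ (n - 1)) = p ^ (n - 1) * (p ^ ?M * p - (n - 1) * p ^ ?M)"
    by (simp add: algebra_simps diff_mult_distrib diff_mult_distrib2)
  also have "\<dots> \<le> p ^ (n - 1) * (p ^ ?M * p - card ?B * p)"
    using bad by (intro mult_left_mono diff_le_mono2) auto
  also have "\<dots> = p ^ (n - 1) * card ?G * p"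
    using card_G by (simp add: diff_mult_distrib)
  also have "\<dots> \<le> card (SL_Fp n p) * p"
    using good by simp
  finally show ?thesis .
qed

lemma X_p_SL_Fp_ratio_le:
  assumes p: "prime p" and n: "2 \<le> n" and pn: "n - 1 < p"
  shows "real (card (X_p n p)) / real (card (SL_Fp n p))
    \<le> real (n - 1 + n * (n - 1)) / (real p - real (n - 1))"
proof -
  define E where "E = real p ^ (n * (n - 1)) * real p ^ (n - 1)"
  define K where "K = real (n - 1 + n * (n - 1))"
  define X where "X = real (card (X_p n p))"
  define S where "S = real (card (SL_Fp n p))"
  have n0: "0 < n"
    using n by simp
  have p0: "0 < real p" and E0: "0 < E" and D0: "0 < real p - real (n - 1)"
    using pn by (simp_all add: E_def)
  have hX: "X * p \<le> K * E"
    using of_nat_mono[OF card_X_p_le[OF p n]] by (simp add: X_def K_def E_def)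
  have hS: "(real p - real (n - 1)) * E \<le> S * p"
  proof -
    have "real ((p - (n - 1)) * (p ^ (n * (n - 1)) * p ^ (n - 1))) \<le> real (card (SL_Fp n p) * p)"
      by (rule of_nat_mono[OF card_SL_Fp_ge[OF p n0]])
    moreover have "real (p - (n - 1)) = real p - real (n - 1)"
      using pn by (simp add: of_nat_diff)
    ultimately show ?thesis
      unfolding S_def E_def by (simp only: of_nat_mult of_nat_power)
  qed
  have "0 < (real p - real (n - 1)) * E"
    using D0 E0 by simp
  with hS have "0 < S * p"
    by linarith
  with p0 have S0: "0 < S"
    by (simp add: zero_less_mult_iff)
  have "X * (real p - real (n - 1)) * p \<le> K * E * (real p - real (n - 1))"
    using hX D0 by (simp add: mult.commute mult.left_commute mult_right_mono)
  also have "\<dots> = K * ((real p - real (n - 1)) * E)"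
    by (simp add: algebra_simps)
  also have "\<dots> \<le> K * (S * p)"
    by (rule mult_left_mono[OF hS]) (simp add: K_def)
  finally have "X * (real p - real (n - 1)) \<le> K * S"
    using p0 by (simp add: mult.assoc mult.commute)
  with S0 D0 show ?thesis
    by (simp add: X_def S_def K_def divide_simps)
qed

theorem corollary6p2:
  fixes n :: nat
  assumes "n \<ge> 2"
  shows "((\<lambda>p. real (card (X_p n p)) / real (card (SL_Fp n p))) \<longlongrightarrow> 0)
           (inf at_top (principal {p. prime p}))"
proof (rule tendsto_sandwich)
  let ?F = "inf at_top (principal {p. prime p})"
  let ?h = "\<lambda>p. real (n - 1 + n * (n - 1)) / (real p - real (n - 1))"
  show "\<forall>\<^sub>F p in ?F. 0 \<le> real (card (X_p n p)) / real (card (SL_Fp n p))"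
    by simp
  show "\<forall>\<^sub>F p in ?F. real (card (X_p n p)) / real (card (SL_Fp n p)) \<le> ?h p"
    unfolding eventually_inf_principal using eventually_gt_at_top[of "n - 1"]
    by eventually_elim (use X_p_SL_Fp_ratio_le assms in auto)
  have "filterlim (\<lambda>p. real p - real (n - 1)) at_top sequentially"
    by (rule filterlim_tendsto_add_at_top[OF tendsto_const filterlim_real_sequentially, of "- _",
          simplified])
  then have "(?h \<longlongrightarrow> 0) at_top"
    by (intro tendsto_divide_0[OF tendsto_const] filterlim_at_top_imp_at_infinity)
  then show "(?h \<longlongrightarrow> 0) ?F"
    by (rule tendsto_mono[OF inf_le1])
qed (simp add: tendsto_const)

end
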